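(* Let $n\ge2$, $m\ge2$, let $p_j\in\{1,\infty\}$ for all $j=1,\dots,m$, and $\frac1p=\sum_{j=1}^m\frac1{p_j}$. Then the strong type estimate $\|\mathcal M(f_1,\dots,f_m)\|_{L^p(\mathbb R^n)}\le C\prod_{j=1}^m\|f_j\|_{L^{p_j}(\mathbb R^n)}$ holds (for some constant $C$ and all $f_j$) if and only if $p_j=\infty$ for all $j=1,\dots,m$.
   Context: For functions $f_1,\dots,f_m$ on $\mathbb R^n$ the $m$-linear spherical maximal function is $$\mathcal M(f_1,\dots,f_m)(x)=\sup_{t>0}\Big|\int_{\mathbb S^{mn-1}}\prod_{j=1}^m f_j(x-ty^j)\,d\sigma_{mn-1}(y^1,\dots,y^m)\Big|,$$ where $(y^1,\dots,y^m)\in\mathbb R^{mn}$ with $y^j\in\mathbb R^n$, and $d\sigma_{mn-1}$ is the surface measure on the unit sphere $\mathbb S^{mn-1}\subset\mathbb R^{mn}$. *)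

theory Defs
  imports "HOL-Analysis.Analysis"
begin

text \<open>Surface measure on the unit sphere of a Euclidean space of dimension d, defined via the
  cone identity: sigma(A) = d * lambda({r*theta. 0 <= r < 1, theta in A}).  Equivalently it is d times
  the push-forward of Lebesgue measure on the open unit ball under x maps to x/|x|
  (the origin is a null set).\<close>
definition sphere_measure :: "'a::euclidean_space measure" where
  "sphere_measure =
     density (distr (density lborel (indicator (ball (0::'a) 1))) borel sgn)
             (\<lambda>_. of_nat DIM('a))"

definition enn_powr :: "ennreal \<Rightarrow> real \<Rightarrow> ennreal" where
  "enn_powr g r = (if g = \<infinity> then \<infinity> else ennreal (enn2real g powr r))"

definition ess_sup_enn :: "('a::euclidean_space \<Rightarrow> ennreal) \<Rightarrow> ennreal" where
  "ess_sup_enn g = Inf {c. AE x in lborel. g x \<le> c}"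

definition Lq_norm :: "ennreal \<Rightarrow> ('a::euclidean_space \<Rightarrow> ennreal) \<Rightarrow> ennreal" where
  "Lq_norm q g = (if q = \<infinity> then ess_sup_enn g
                  else enn_powr (\<integral>\<^sup>+ x. enn_powr (g x) (enn2real q) \<partial>lborel) (1 / enn2real q))"

text \<open>The points of R^(mn) are written as
  (y^1,...,y^m) with y^j in R^n, i.e. elements of (real^'n)^'m.\<close>
definition sph_avg :: "('m::finite \<Rightarrow> real^'n \<Rightarrow> real) \<Rightarrow> real^'n \<Rightarrow> real \<Rightarrow> ennreal" where
  "sph_avg f x t =
     (let h = (\<lambda>y::(real^'n)^'m. \<Prod>j\<in>UNIV. f j (x - t *\<^sub>R (y $ j)))
      in if integrable sphere_measure h then ennreal \<bar>integral\<^sup>L sphere_measure h\<bar> else \<infinity>)"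

definition multi_sph_max :: "('m::finite \<Rightarrow> real^'n \<Rightarrow> real) \<Rightarrow> real^'n \<Rightarrow> ennreal" where
  "multi_sph_max f x = (SUP t\<in>{0<..}. sph_avg f x t)"

end

theory Submission
  imports Defs "HOL-Probability.Essential_Supremum"
begin

text \<open>Sufficiency: if every \<open>p\<^sub>j = \<infinity>\<close>, each spherical average is at most
  \<open>\<sigma>(S\<^sup>m\<^sup>n\<^sup>-\<^sup>1) \<Prod>\<^sub>j \<parallel>f\<^sub>j\<parallel>\<^sub>\<infinity>\<close>. The only subtlety is that \<open>\<parallel>f\<^sub>j\<parallel>\<^sub>\<infinity>\<close> bounds \<open>f\<^sub>j\<close> only off a
  null set \<open>N\<^sub>j\<close>, so one needs \<open>{y. x - t y\<^sup>j \<in> N\<^sub>j}\<close> to be \<open>\<sigma>\<close>-null. For \<open>m \<ge> 2\<close> this holds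
  because the block projection \<open>y \<mapsto> y\<^sup>j\<close> of \<open>\<sigma>\<close> is absolutely continuous: in the cone model of
  \<open>\<sigma>\<close>, Fubini in the \<open>j\<close>-th block leaves the preimage of a null set under
  \<open>b \<mapsto> b / \<surd>(|b|\<^sup>2 + r\<^sup>2)\<close>, a diffeomorphism of \<open>\<real>\<^sup>n\<close> onto the unit ball, where \<open>r\<close> is
  the norm of the other blocks.

  Necessity: if \<open>K = {j. p\<^sub>j = 1}\<close> is nonempty then \<open>p = 1/|K|\<close>. Take \<open>f\<^sub>j\<close> the indicator of
  the unit ball for \<open>j \<in> K\<close> and \<open>f\<^sub>j = 1\<close> otherwise. For \<open>|x| \<ge> 1\<close> and \<open>t \<sim> |x|\<close> the
  directions \<open>y\<close> with \<open>|x - t y\<^sup>j| \<le> 1\<close> for all \<open>j \<in> K\<close> have measure \<open>\<gtrsim> |x|\<^sup>-\<^sup>n\<^sup>|\<^sup>K\<^sup>|\<close>: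
  keep the blocks outside \<open>K\<close> of size \<open>\<sim> 1\<close> and let the \<open>K\<close>-blocks range over a box of
  side \<open>\<sim> 1/|x|\<close> around a point aimed at \<open>x\<close> (for \<open>K = UNIV\<close> a ball of radius \<open>\<sim> 1/|x|\<close>
  suffices). Hence \<open>\<M>(f)(x)\<^sup>p \<gtrsim> |x|\<^sup>-\<^sup>n\<close>, which is not integrable at infinity, although the
  right-hand side is finite.\<close>

section \<open>Lebesgue measure on block vectors\<close>

definition vec_merge :: "'m set \<Rightarrow> 'a^'m \<Rightarrow> 'a^'m \<Rightarrow> 'a^'m" where
  "vec_merge K a w = (\<chi> i. if i \<in> K then a $ i else w $ i)"

lemma vec_merge_nth [simp]: "vec_merge K a w $ i = (if i \<in> K then a $ i else w $ i)"
  by (simp add: vec_merge_def)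

lemma mem_box_vec:
  fixes x :: "'a::euclidean_space ^ 'm::finite"
  shows "x \<in> box l u \<longleftrightarrow> (\<forall>i. x $ i \<in> box (l $ i) (u $ i))"
  by (auto simp: mem_box Basis_vec_def inner_axis)

lemma One_vec_nth [simp]: "(One::'a::euclidean_space^'m::finite) $ i = One"
proof (rule euclidean_eqI)
  fix v :: 'a assume v: "v \<in> Basis"
  hence "axis i v \<in> (Basis::('a^'m) set)" by (auto simp: Basis_vec_def)
  hence "(One::'a^'m) \<bullet> axis i v = 1" by simp
  thus "(One::'a^'m) $ i \<bullet> v = One \<bullet> v" using v by (simp add: inner_axis)
qed

lemma sum_Basis_vec_nth [simp]:
  "(\<Sum>x\<in>(Basis::('a::euclidean_space^'m::finite) set). x $ i) = (One::'a)"
  using One_vec_nth[where 'a='a and 'm='m and i=i] by simp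

lemma prod_Basis_vec:
  fixes g :: "'a::euclidean_space ^ 'm::finite \<Rightarrow> 'b::comm_monoid_mult"
  shows "(\<Prod>b\<in>Basis. g b) = (\<Prod>i\<in>UNIV. \<Prod>u\<in>Basis. g (axis i u))"
proof -
  have "(\<Prod>b\<in>Basis. g b) = (\<Prod>b\<in>(\<Union>i. \<Union>u\<in>Basis. {axis i u}). g b)"
    by (simp add: Basis_vec_def)
  also have "\<dots> = (\<Prod>i\<in>UNIV. \<Prod>b\<in>axis i ` Basis. g b)"
    by (subst prod.UNION_disjoint) (auto simp: axis_eq_axis intro!: prod.cong)
  also have "\<dots> = (\<Prod>i\<in>UNIV. \<Prod>u\<in>Basis. g (axis i u))"
    by (intro prod.cong refl prod.reindex[unfolded comp_def] inj_onI) (auto simp: axis_eq_axis)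
  finally show ?thesis .
qed

lemma le_Basis_vec:
  fixes l u :: "'a::euclidean_space ^ 'm::finite"
  shows "(\<forall>b\<in>Basis. l \<bullet> b \<le> u \<bullet> b) \<longleftrightarrow> (\<forall>i. \<forall>v\<in>Basis. l $ i \<bullet> v \<le> u $ i \<bullet> v)"
  by (auto simp: Basis_vec_def inner_axis)

lemma emeasure_lborel_box_vec:
  fixes l u :: "'a::euclidean_space^'m::finite"
  assumes "\<And>i v. v \<in> Basis \<Longrightarrow> l $ i \<bullet> v \<le> u $ i \<bullet> v"
  shows "emeasure lborel (box l u) = ennreal (\<Prod>i\<in>UNIV. \<Prod>v\<in>Basis. (u $ i - l $ i) \<bullet> v)"
  using assms le_Basis_vec[of l u]
  by (simp add: emeasure_lborel_box_eq prod_Basis_vec[of "\<lambda>b. (u - l) \<bullet> b"] inner_axis)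

lemma borel_measurable_vec_nth [measurable]:
  "(\<lambda>x::'a::euclidean_space^'m::finite. x $ i) \<in> borel_measurable borel"
  by (intro borel_measurable_continuous_onI linear_continuous_on bounded_linear_vec_nth)

lemma borel_measurable_vec_merge_pair [measurable]:
  "(\<lambda>p. vec_merge K (fst p) (snd p))
     \<in> borel_measurable (borel :: (('a::euclidean_space^'m::finite) \<times> ('a^'m)) measure)"
  unfolding vec_merge_def
proof (intro borel_measurable_continuous_onI continuous_on_vec_lambda)
  fix i
  show "continuous_on UNIV (\<lambda>x::('a^'m) \<times> ('a^'m). if i \<in> K then fst x $ i else snd x $ i)"
    by (cases "i \<in> K") (auto intro!: continuous_intros)
qed

lemma borel_measurable_vec_merge [measurable]:
  fixes f g :: "'b \<Rightarrow> 'a::euclidean_space^'m::finite"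
  assumes [measurable]: "f \<in> borel_measurable M" "g \<in> borel_measurable M"
  shows "(\<lambda>x. vec_merge K (f x) (g x)) \<in> borel_measurable M"
proof -
  have "(\<lambda>x. (f x, g x)) \<in> borel_measurable M"
    using measurable_Pair[OF assms] by (simp add: borel_prod)
  from measurable_compose[OF this borel_measurable_vec_merge_pair[of K]] show ?thesis by simp
qed

text \<open>Fubini across the splitting of the blocks into those in \<open>K\<close> and the rest: \<open>a\<close> supplies
  the \<open>K\<close>-blocks and \<open>w\<close> the others, while the cube factor integrates out the unused blocks
  of \<open>a\<close> and \<open>w\<close>.\<close>

lemma lborel_eq_distr_vec_merge:
  "(lborel :: ('a::euclidean_space^'m::finite) measure) =
     distr (density (lborel \<Otimes>\<^sub>M lborel) (\<lambda>p. indicator (box 0 One) (vec_merge K (fst p) (snd p))))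
       borel (\<lambda>p. vec_merge K (snd p) (fst p))"
  (is "_ = distr (density _ ?D) borel ?P")
proof (rule lborel_eqI)
  have [measurable]: "fst \<in> borel_measurable (lborel \<Otimes>\<^sub>M (lborel::('a^'m) measure))"
    "snd \<in> borel_measurable (lborel \<Otimes>\<^sub>M (lborel::('a^'m) measure))"
    using measurable_fst[of lborel lborel] measurable_snd[of lborel lborel] by simp_all
  have P: "?P \<in> borel_measurable (lborel \<Otimes>\<^sub>M lborel)"
    by measurable
  fix l u :: "'a^'m"
  assume "\<And>b. b \<in> Basis \<Longrightarrow> l \<bullet> b \<le> u \<bullet> b"
  hence le: "\<And>i v. v \<in> Basis \<Longrightarrow> l$i \<bullet> v \<le> u$i \<bullet> v"
    using le_Basis_vec[of l u] by blast
  let ?S1 = "box (vec_merge K 0 l) (vec_merge K One u)"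
  let ?S2 = "box (vec_merge K l 0) (vec_merge K u One)"
  have S1: "emeasure lborel ?S1 =
      ennreal (\<Prod>i\<in>UNIV. \<Prod>v\<in>Basis. if i \<in> K then 1 else (u$i - l$i) \<bullet> v)"
    by (subst emeasure_lborel_box_vec) (auto simp: le inner_diff_left
        intro!: prod.cong arg_cong[where f=ennreal])
  have S2: "emeasure lborel ?S2 =
      ennreal (\<Prod>i\<in>UNIV. \<Prod>v\<in>Basis. if i \<in> K then (u$i - l$i) \<bullet> v else 1)"
    by (subst emeasure_lborel_box_vec) (auto simp: le inner_diff_left
        intro!: prod.cong arg_cong[where f=ennreal])
  have ind: "?D p * indicator (?P -` box l u \<inter> space (lborel \<Otimes>\<^sub>M lborel)) p =
      indicator (?S1 \<times> ?S2) p" for p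
    by (cases p) (auto simp: mem_box_vec space_pair_measure split: split_indicator if_split_asm)
  have "emeasure (distr (density (lborel \<Otimes>\<^sub>M lborel) ?D) borel ?P) (box l u) =
      (\<integral>\<^sup>+p. ?D p * indicator (?P -` box l u \<inter> space (lborel \<Otimes>\<^sub>M lborel)) p \<partial>(lborel \<Otimes>\<^sub>M lborel))"
    using measurable_sets[OF P, of "box l u"] by (subst emeasure_distr) (auto simp: emeasure_density)
  also have "\<dots> = emeasure lborel ?S1 * emeasure lborel ?S2"
    by (simp add: ind lborel.emeasure_pair_measure_Times)
  also have "\<dots> = ennreal (\<Prod>i\<in>UNIV. \<Prod>v\<in>Basis. (u$i - l$i) \<bullet> v)"
    unfolding S1 S2
    by (subst ennreal_mult'[symmetric]) (auto simp: prod.distrib[symmetric] le inner_diff_left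
        intro!: prod_nonneg arg_cong[where f=ennreal] prod.cong)
  also have "\<dots> = emeasure lborel (box l u)"
    by (simp add: emeasure_lborel_box_vec le)
  finally show "emeasure (distr (density (lborel \<Otimes>\<^sub>M lborel) ?D) borel ?P) (box l u) =
      (\<Prod>b\<in>Basis. (u - l) \<bullet> b)"
    using \<open>\<And>b. b \<in> Basis \<Longrightarrow> l \<bullet> b \<le> u \<bullet> b\<close> by (simp add: emeasure_lborel_box_eq)
qed simp

lemma nn_integral_lborel_vec_merge:
  fixes F :: "'a::euclidean_space ^ 'm::finite \<Rightarrow> ennreal"
  assumes [measurable]: "F \<in> borel_measurable borel"
  shows "(\<integral>\<^sup>+z. F z \<partial>lborel) =
     (\<integral>\<^sup>+w. \<integral>\<^sup>+a. F (vec_merge K a w) * indicator (box 0 One) (vec_merge K w a) \<partial>lborel \<partial>lborel)"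
proof -
  have [measurable]: "fst \<in> borel_measurable (lborel \<Otimes>\<^sub>M (lborel::('a^'m) measure))"
    "snd \<in> borel_measurable (lborel \<Otimes>\<^sub>M (lborel::('a^'m) measure))"
    using measurable_fst[of lborel lborel] measurable_snd[of lborel lborel] by simp_all
  show ?thesis
    by (subst lborel_eq_distr_vec_merge[of K])
      (simp add: nn_integral_distr nn_integral_density lborel.nn_integral_fst[symmetric] mult.commute)
qed

lemma emeasure_lborel_cylinder_null:
  fixes M :: "'a::euclidean_space set" and j :: "'m::finite"
  assumes [measurable]: "M \<in> sets borel" and M0: "emeasure lborel M = 0"
  shows "emeasure lborel {x::'a^'m. x$j \<in> M \<and> (\<forall>i. i \<noteq> j \<longrightarrow> x$i \<in> box 0 One)} = 0"
    (is "emeasure lborel ?C = 0")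
proof -
  let ?R = "{x::'a^'m. \<forall>i. i \<noteq> j \<longrightarrow> x$i \<in> box 0 One}"
  have [measurable]: "?R \<in> sets borel"
    by measurable
  have pre: "\<And>S i. S \<in> sets borel \<Longrightarrow> (\<lambda>x::'a^'m. x$i) -` S \<in> sets borel"
    using measurable_sets_borel[OF borel_measurable_vec_nth] by blast
  define \<nu> where "\<nu> = distr (density lborel (indicator ?R)) borel (\<lambda>x. x$j)"
  have "lborel = \<nu>"
  proof (rule lborel_eqI)
    fix l u :: 'a
    assume le: "\<And>b. b \<in> Basis \<Longrightarrow> l \<bullet> b \<le> u \<bullet> b"
    let ?L = "vec_merge {j} (\<chi> _. l) (0::'a^'m)" and ?U = "vec_merge {j} (\<chi> _. u) (One::'a^'m)"
    have U: "\<And>i. ?U $ i = (if i = j then u else One)"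
      by (simp only: vec_merge_nth One_vec_nth) simp
    have L: "\<And>i. ?L $ i = (if i = j then l else 0)"
      by simp
    have "?R \<inter> (\<lambda>x. x$j) -` box l u = box ?L ?U"
      by (auto simp: mem_box_vec L U simp del: vec_merge_nth) (metis (full_types))+
    hence "emeasure \<nu> (box l u) = emeasure lborel (box ?L ?U)"
      unfolding \<nu>_def by (subst emeasure_distr) (auto simp: pre emeasure_restricted)
    also have "\<dots> = ennreal (\<Prod>i\<in>UNIV. \<Prod>v\<in>Basis. (?U$i - ?L$i) \<bullet> v)"
      by (rule emeasure_lborel_box_vec) (auto simp: U le)
    also have "\<dots> = ennreal (\<Prod>i\<in>UNIV. if i = j then (\<Prod>v\<in>Basis. (u - l) \<bullet> v) else 1)"
      by (intro arg_cong[where f=ennreal] prod.cong) (auto simp: U inner_diff_left)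
    finally show "emeasure \<nu> (box l u) = (\<Prod>b\<in>Basis. (u - l) \<bullet> b)"
      by (simp add: prod.If_cases)
  qed (simp add: \<nu>_def)
  hence "emeasure \<nu> M = 0"
    using M0 by simp
  hence "emeasure (density lborel (indicator ?R)) ((\<lambda>x. x$j) -` M) = 0"
    unfolding \<nu>_def by (subst (asm) emeasure_distr) auto
  moreover have "?C = ?R \<inter> (\<lambda>x. x$j) -` M"
    by auto
  ultimately show ?thesis
    by (subst (asm) emeasure_restricted) (auto intro: pre)
qed

lemma norm_vec_power2: "norm (x::'a::real_normed_vector^'m::finite) ^ 2 = (\<Sum>i\<in>UNIV. norm (x$i) ^ 2)"
  by (simp add: norm_vec_def L2_set_def sum_nonneg)

lemma norm_vec_merge_power2:
  fixes a w :: "'a::real_normed_vector^'m::finite"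
  shows "norm (vec_merge K a w) ^ 2 = norm (vec_merge K a 0) ^ 2 + norm (vec_merge K 0 w) ^ 2"
proof -
  have "norm (vec_merge K a w $ i) ^ 2 = norm (vec_merge K a 0 $ i) ^ 2 + norm (vec_merge K 0 w $ i) ^ 2"
    for i
    by simp
  thus ?thesis
    by (simp add: norm_vec_power2 sum.distrib)
qed

lemma norm_vec_merge_singleton [simp]:
  "norm (vec_merge {j} a (0::'a::real_normed_vector^'m::finite)) = norm (a $ j)"
proof -
  have "norm (vec_merge {j} a 0 $ i) ^ 2 = (if i = j then norm (a $ j) ^ 2 else 0)" for i
    by simp
  hence "norm (vec_merge {j} a 0) ^ 2 = norm (a $ j) ^ 2"
    by (simp add: norm_vec_power2)
  thus ?thesis by (simp add: power2_eq_iff_nonneg)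
qed

lemma negligible_iff_emeasure_lborel: "A \<in> sets borel \<Longrightarrow> negligible A \<longleftrightarrow> emeasure lborel A = 0"
  by (metis negligible_iff_null_sets null_sets_completion_iff sets_lborel null_setsD1 null_setsI)

section \<open>Preimages of null sets under the radial projection\<close>

definition squash :: "real \<Rightarrow> 'a::real_normed_vector \<Rightarrow> 'a" where
  "squash r b = b /\<^sub>R sqrt (norm b ^ 2 + r ^ 2)"

lemma norm_squash_less_1:
  assumes "r > 0"
  shows "norm (squash r b) < 1"
proof -
  have "norm b < sqrt (norm b ^ 2 + r ^ 2)"
    using assms by (intro real_less_rsqrt) simp
  moreover have "sqrt (norm b ^ 2 + r ^ 2) > 0"
    using assms by (simp add: add_nonneg_pos)
  ultimately show ?thesis
    by (simp add: squash_def field_simps)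
qed

lemma unsquash_squash:
  assumes r: "r > 0"
  shows "(r / sqrt (1 - norm (squash r b) ^ 2)) *\<^sub>R squash r b = b"
proof -
  define s where "s = sqrt (norm b ^ 2 + r ^ 2)"
  have s: "s > 0" "s ^ 2 = norm b ^ 2 + r ^ 2"
    using r by (auto simp: s_def add_nonneg_pos)
  have "norm (squash r b) = norm b / s"
    using s(1) by (simp add: squash_def s_def[symmetric] divide_inverse_commute)
  hence "1 - norm (squash r b) ^ 2 = (s ^ 2 - norm b ^ 2) / s ^ 2"
    using s(1) by (simp add: diff_divide_distrib power_divide)
  also have "\<dots> = (r / s) ^ 2"
    by (simp add: s(2) power_divide)
  finally have "sqrt (1 - norm (squash r b) ^ 2) = r / s"
    using r s by simp
  thus ?thesis
    using r s by (simp add: squash_def s_def[symmetric])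
qed

lemma sgn_vec_merge_nth:
  fixes a w :: "'a::real_normed_vector^'m::finite"
  assumes "j \<in> K"
  shows "sgn (vec_merge K a w) $ j = squash (norm (vec_merge K 0 w)) (vec_merge K a 0) $ j"
proof -
  have "norm (vec_merge K a w) = sqrt (norm (vec_merge K a 0) ^ 2 + norm (vec_merge K 0 w) ^ 2)"
    by (simp flip: norm_vec_merge_power2)
  thus ?thesis
    using assms by (simp add: sgn_div_norm squash_def)
qed

lemma negligible_squash_preimage:
  fixes N :: "'a::euclidean_space set"
  assumes r: "r > 0" and "negligible N"
  shows "negligible {b. squash r b \<in> N}"
proof -
  define \<phi> where "\<phi> = (\<lambda>c::'a. (r / sqrt (1 - c \<bullet> c)) *\<^sub>R c)"
  have "{b. squash r b \<in> N} \<subseteq> \<phi> ` (N \<inter> ball 0 1)"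
  proof
    fix b assume "b \<in> {b. squash r b \<in> N}"
    moreover have "\<phi> (squash r b) = b"
      using unsquash_squash[OF r, of b] by (simp add: \<phi>_def power2_norm_eq_inner)
    ultimately show "b \<in> \<phi> ` (N \<inter> ball 0 1)"
      using norm_squash_less_1[OF r, of b] by (metis IntI image_eqI mem_Collect_eq mem_ball_0)
  qed
  moreover have "negligible (\<phi> ` (N \<inter> ball 0 1))"
  proof (rule negligible_differentiable_image_negligible)
    show "negligible (N \<inter> ball 0 1)"
      using \<open>negligible N\<close> by (rule negligible_subset) auto
    show "\<phi> differentiable_on N \<inter> ball 0 1"
      unfolding differentiable_on_def
    proof
      fix c :: 'a assume "c \<in> N \<inter> ball 0 1"
      hence "0 < 1 - c \<bullet> c"
        by (simp flip: power2_norm_eq_inner add: abs_square_less_1)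
      thus "\<phi> differentiable at c within N \<inter> ball 0 1"
        unfolding \<phi>_def differentiable_def by (intro exI) (auto intro!: derivative_eq_intros)
    qed
  qed simp
  ultimately show ?thesis
    by (rule negligible_subset[rotated])
qed

lemma AE_lborel_vec_merge_singleton_nonzero:
  assumes "CARD('m::finite) \<ge> 2"
  shows "AE w in lborel. vec_merge {j} 0 (w::'a::euclidean_space^'m) \<noteq> 0"
proof -
  have "\<not> (UNIV::'m set) \<subseteq> {j}"
    using card_mono[of "{j}" "UNIV::'m set"] assms by auto
  then obtain i0 :: 'm where i0: "i0 \<noteq> j"
    by blast
  obtain v :: 'a where v: "v \<in> Basis"
    using nonempty_Basis by blast
  let ?H = "{w::'a^'m. axis i0 v \<bullet> w = 0}"
  have "negligible ?H"
    using v by (intro negligible_hyperplane) (simp add: axis_eq_0_iff nonzero_Basis)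
  hence "?H \<in> null_sets lborel"
    using negligible_iff_emeasure_lborel[of ?H] by (auto intro: null_setsI)
  moreover have "{w \<in> space lborel. \<not> vec_merge {j} 0 w \<noteq> 0} \<subseteq> ?H"
    using i0 by (auto simp: vec_eq_iff inner_axis' dest: spec[of _ i0])
  ultimately show ?thesis
    by (rule AE_I')
qed

lemma squash_vec_merge_singleton_nth:
  "squash r (vec_merge {j} a (0::'a::real_normed_vector^'m::finite)) $ j = squash r (a $ j)"
  by (simp add: squash_def)

lemma nn_integral_sgn_vec_nth_null_fiber:
  fixes N :: "'a::euclidean_space set" and j :: "'m::finite" and w :: "'a^'m"
  assumes [measurable]: "N \<in> sets borel" and N0: "emeasure lborel N = 0"
    and w: "vec_merge {j} 0 w \<noteq> 0"
  shows "(\<integral>\<^sup>+a. indicator {z. z \<noteq> 0 \<and> sgn z $ j \<in> N} (vec_merge {j} a w)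
            * indicator (box 0 One) (vec_merge {j} w a) \<partial>lborel) = 0"
proof -
  let ?Z = "{z::'a^'m. z \<noteq> 0 \<and> sgn z $ j \<in> N}"
  define r where "r = norm (vec_merge {j} 0 w)"
  have r: "r > 0"
    using w by (simp add: r_def)
  define A where "A = {b::'a. squash r b \<in> N}"
  have [measurable]: "A \<in> sets borel"
    unfolding A_def squash_def by measurable
  have "negligible A"
    unfolding A_def using N0 negligible_iff_emeasure_lborel[of N]
    by (intro negligible_squash_preimage r) simp
  hence A0: "emeasure lborel A = 0"
    using negligible_iff_emeasure_lborel[of A] by simp
  have "(\<integral>\<^sup>+a. indicator ?Z (vec_merge {j} a w) * indicator (box 0 One) (vec_merge {j} w a) \<partial>lborel)
     \<le> (\<integral>\<^sup>+a. indicator {x::'a^'m. x$j \<in> A \<and> (\<forall>i. i \<noteq> j \<longrightarrow> x$i \<in> box 0 One)} a \<partial>lborel)"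
  proof (intro nn_integral_mono)
    fix a :: "'a^'m"
    have "a$j \<in> A" if "vec_merge {j} a w \<in> ?Z"
      using that sgn_vec_merge_nth[of j "{j}" a w]
      by (simp add: A_def r_def squash_vec_merge_singleton_nth)
    moreover have "a$i \<in> box 0 One" if "vec_merge {j} w a \<in> box 0 One" "i \<noteq> j" for i
    proof -
      have "vec_merge {j} w a $ i \<in> box ((0::'a^'m) $ i) ((One::'a^'m) $ i)"
        using that(1) mem_box_vec by blast
      thus ?thesis
        using that(2) by (simp only: One_vec_nth vec_merge_nth) simp
    qed
    ultimately show "indicator ?Z (vec_merge {j} a w) * indicator (box 0 One) (vec_merge {j} w a)
        \<le> (indicator {x::'a^'m. x$j \<in> A \<and> (\<forall>i. i \<noteq> j \<longrightarrow> x$i \<in> box 0 One)} a :: ennreal)"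
      by (auto split: split_indicator)
  qed
  also have "\<dots> = 0"
    by (simp add: emeasure_lborel_cylinder_null[OF _ A0])
  finally show ?thesis
    by simp
qed

lemma emeasure_lborel_sgn_vec_nth_null:
  fixes N :: "'a::euclidean_space set" and j :: "'m::finite"
  assumes [measurable]: "N \<in> sets borel" and N0: "emeasure lborel N = 0"
    and m: "CARD('m) \<ge> 2"
  shows "emeasure lborel {z::'a^'m. z \<noteq> 0 \<and> sgn z $ j \<in> N} = 0"
proof -
  let ?Z = "{z::'a^'m. z \<noteq> 0 \<and> sgn z $ j \<in> N}"
  have [measurable]: "?Z \<in> sets borel"
    by measurable
  have "emeasure lborel ?Z =
      (\<integral>\<^sup>+w. \<integral>\<^sup>+a. indicator ?Z (vec_merge {j} a w) * indicator (box 0 One) (vec_merge {j} w a)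
        \<partial>lborel \<partial>lborel)"
    by (subst nn_integral_lborel_vec_merge[symmetric]) simp_all
  also have "\<dots> = (\<integral>\<^sup>+w. 0 \<partial>(lborel :: ('a^'m) measure))"
    using AE_lborel_vec_merge_singleton_nonzero[OF m, of j]
    by (intro nn_integral_cong_AE) (auto elim!: eventually_mono
        simp: nn_integral_sgn_vec_nth_null_fiber[OF _ N0])
  finally show ?thesis
    by simp
qed

section \<open>The sphere measure\<close>

lemma sets_borel_ball [measurable]: "ball (c::'a::euclidean_space) r \<in> sets borel"
  by simp

lemma space_sphere_measure [simp]: "space (sphere_measure :: 'a::euclidean_space measure) = UNIV"
  by (simp add: sphere_measure_def)

lemma sets_sphere_measure [simp, measurable_cong]:
  "sets (sphere_measure :: 'a::euclidean_space measure) = sets borel"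
  by (simp add: sphere_measure_def)

lemma nn_integral_sphere_measure:
  fixes g :: "'a::euclidean_space \<Rightarrow> ennreal"
  assumes [measurable]: "g \<in> borel_measurable borel"
  shows "(\<integral>\<^sup>+y. g y \<partial>sphere_measure) =
    (\<integral>\<^sup>+z. of_nat DIM('a) * (indicator (ball 0 1) z * g (sgn z)) \<partial>lborel)"
proof -
  have "(\<integral>\<^sup>+y. g y \<partial>sphere_measure) =
      (\<integral>\<^sup>+z. of_nat DIM('a) * g (sgn z) \<partial>density lborel (indicator (ball (0::'a) 1)))"
    unfolding sphere_measure_def by (simp add: nn_integral_density nn_integral_distr)
  also have "\<dots> = (\<integral>\<^sup>+z. indicator (ball 0 1) z * (of_nat DIM('a) * g (sgn z)) \<partial>lborel)"
    by (subst nn_integral_density) auto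
  finally show ?thesis
    by (simp add: ac_simps)
qed

lemma emeasure_sphere_measure_UNIV:
  "emeasure (sphere_measure :: 'a::euclidean_space measure) UNIV =
     of_nat DIM('a) * emeasure lborel (ball (0::'a) 1)"
proof -
  have "emeasure (sphere_measure :: 'a measure) UNIV = (\<integral>\<^sup>+y. 1 \<partial>(sphere_measure :: 'a measure))"
    by simp
  also have "\<dots> = (\<integral>\<^sup>+z. of_nat DIM('a) * indicator (ball (0::'a) 1) z \<partial>lborel)"
    by (subst nn_integral_sphere_measure) auto
  finally show ?thesis
    by (subst (asm) nn_integral_cmult) auto
qed

lemma finite_measure_sphere_measure: "finite_measure (sphere_measure :: 'a::euclidean_space measure)"
  using emeasure_lborel_ball_finite[of "0::'a" 1]
  by (intro finite_measureI) (auto simp: emeasure_sphere_measure_UNIV ennreal_mult_eq_top_iff)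

lemma emeasure_lborel_affine_preimage_null:
  fixes N :: "'a::euclidean_space set"
  assumes [measurable]: "N \<in> sets borel" and N0: "emeasure lborel N = 0" and t: "t \<noteq> 0"
  shows "emeasure lborel {b. x - t *\<^sub>R b \<in> N} = 0"
proof -
  have "emeasure lborel N =
      emeasure (density (distr lborel borel (\<lambda>b. x + (-t) *\<^sub>R b)) (\<lambda>_. \<bar>-t\<bar> ^ DIM('a))) N"
    using lborel_affine[of "-t" x] t by simp
  also have "\<dots> = ennreal (\<bar>t\<bar> ^ DIM('a)) * emeasure (distr lborel borel (\<lambda>b. x + (-t) *\<^sub>R b)) N"
    by (subst emeasure_density) (auto simp: nn_integral_cmult_indicator)
  also have "emeasure (distr lborel borel (\<lambda>b. x + (-t) *\<^sub>R b)) N = emeasure lborel {b. x - t *\<^sub>R b \<in> N}"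
    by (subst emeasure_distr) (auto simp: vimage_def)
  finally show ?thesis
    using N0 t by (simp add: ennreal_mult_eq_top_iff)
qed

text \<open>This is where \<open>m \<ge> 2\<close> enters: for \<open>m = 1\<close> the projection is the sphere measure itself,
  which is singular with respect to Lebesgue measure.\<close>

lemma AE_sphere_measure_vec_nth_notin:
  fixes N :: "'a::euclidean_space set" and j :: "'m::finite"
  assumes [measurable]: "N \<in> sets borel" and N0: "emeasure lborel N = 0" and m: "CARD('m) \<ge> 2"
  shows "AE y in (sphere_measure :: ('a^'m) measure). y $ j \<notin> N"
proof -
  have "AE z in lborel. z \<notin> {z::'a^'m. z \<noteq> 0 \<and> sgn z $ j \<in> N}"
    using emeasure_lborel_sgn_vec_nth_null[OF _ N0 m, of j] by (intro AE_I'[OF null_setsI]) auto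
  moreover have "AE z in lborel. z \<noteq> (0::'a^'m)"
    by (rule AE_lborel_singleton)
  ultimately have AE: "AE z in lborel. sgn (z::'a^'m) $ j \<notin> N"
    by eventually_elim auto
  have "emeasure (sphere_measure :: ('a^'m) measure) {y. y $ j \<in> N} =
      (\<integral>\<^sup>+z. of_nat DIM('a^'m) * (indicator (ball 0 1) z * indicator {y::'a^'m. y $ j \<in> N} (sgn z))
        \<partial>lborel)"
    by (subst nn_integral_sphere_measure[symmetric]) simp_all
  also have "\<dots> = (\<integral>\<^sup>+z. 0 \<partial>(lborel::('a^'m) measure))"
    by (rule nn_integral_cong_AE) (use AE in \<open>eventually_elim, auto split: split_indicator\<close>)
  finally show ?thesis
    by (subst AE_iff_measurable[where N="{y. y $ j \<in> N}"]) auto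
qed

section \<open>Boundedness for \<open>L\<^sup>\<infinity>\<close> data\<close>

lemma AE_le_ess_sup_enn:
  fixes g :: "'a::euclidean_space \<Rightarrow> ennreal"
  assumes "g \<in> borel_measurable borel"
  shows "AE x in lborel. g x \<le> ess_sup_enn g"
proof -
  have "esssup lborel g = ess_sup_enn g"
    unfolding ess_sup_enn_def by (rule esssup_eq_AE) (use assms in simp)
  thus ?thesis
    using esssup_AE[where M=lborel and f=g] by simp
qed

lemma ess_sup_enn_le: "(\<And>x. g x \<le> c) \<Longrightarrow> ess_sup_enn g \<le> c"
  unfolding ess_sup_enn_def by (rule Inf_lower) (auto intro: AE_I2)

lemma AE_sphere_measure_le_ess_sup:
  fixes f :: "'m::finite \<Rightarrow> 'a::euclidean_space \<Rightarrow> real"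
  assumes m: "CARD('m) \<ge> 2" and [measurable]: "\<And>j. f j \<in> borel_measurable borel" and t: "t \<noteq> 0"
  shows "AE y in (sphere_measure :: ('a^'m) measure).
           \<forall>j\<in>UNIV. ennreal \<bar>f j (x - t *\<^sub>R y $ j)\<bar> \<le> ess_sup_enn (\<lambda>x. ennreal \<bar>f j x\<bar>)"
proof (rule AE_finite_allI)
  fix j
  let ?N = "{a. ess_sup_enn (\<lambda>x. ennreal \<bar>f j x\<bar>) < ennreal \<bar>f j a\<bar>}"
  have [measurable]: "?N \<in> sets borel"
    by measurable
  have "AE a in lborel. ennreal \<bar>f j a\<bar> \<le> ess_sup_enn (\<lambda>x. ennreal \<bar>f j x\<bar>)"
    by (rule AE_le_ess_sup_enn) measurable
  hence "emeasure lborel ?N = 0"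
    by (subst (asm) AE_iff_measurable[where N="?N"]) (auto simp: not_le)
  hence "AE y in (sphere_measure :: ('a^'m) measure). y $ j \<notin> {b. x - t *\<^sub>R b \<in> ?N}"
    using t by (intro AE_sphere_measure_vec_nth_notin m emeasure_lborel_affine_preimage_null) simp_all
  thus "AE y in (sphere_measure :: ('a^'m) measure).
      ennreal \<bar>f j (x - t *\<^sub>R y $ j)\<bar> \<le> ess_sup_enn (\<lambda>x. ennreal \<bar>f j x\<bar>)"
    by eventually_elim (simp add: not_less)
qed simp

lemma sph_avg_le_prod_ess_sup:
  fixes f :: "'m::finite \<Rightarrow> real^'n::finite \<Rightarrow> real"
  assumes m: "CARD('m) \<ge> 2" and [measurable]: "\<And>j. f j \<in> borel_measurable borel"
    and fin: "\<And>j. ess_sup_enn (\<lambda>x. ennreal \<bar>f j x\<bar>) < \<infinity>" and t: "t > 0"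
  shows "sph_avg f x t \<le> emeasure (sphere_measure :: ((real^'n)^'m) measure) UNIV
           * (\<Prod>j\<in>UNIV. ess_sup_enn (\<lambda>x. ennreal \<bar>f j x\<bar>))"
proof -
  let ?S = "sphere_measure :: ((real^'n)^'m) measure"
  define c where "c j = ess_sup_enn (\<lambda>x. ennreal \<bar>f j x\<bar>)" for j
  define B where "B = (\<Prod>j\<in>UNIV. enn2real (c j))"
  define h where "h = (\<lambda>y::(real^'n)^'m. \<Prod>j\<in>UNIV. f j (x - t *\<^sub>R (y $ j)))"
  have c: "c j = ennreal (enn2real (c j))" for j
    using fin by (simp add: c_def less_top)
  have [measurable]: "h \<in> borel_measurable ?S"
    unfolding h_def by measurable
  have "AE y in ?S.
      \<forall>j\<in>UNIV. ennreal \<bar>f j (x - t *\<^sub>R y $ j)\<bar> \<le> c j"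
    unfolding c_def using t by (intro AE_sphere_measure_le_ess_sup m) simp_all
  hence "AE y in ?S. ennreal (norm (h y)) \<le> ennreal B"
  proof eventually_elim
    case (elim y)
    hence "\<bar>f j (x - t *\<^sub>R y $ j)\<bar> \<le> enn2real (c j)" for j
      using c[of j] by (metis UNIV_I ennreal_le_iff enn2real_nonneg)
    thus ?case
      by (auto simp: h_def B_def abs_prod intro!: ennreal_leI prod_mono)
  qed
  hence "(\<integral>\<^sup>+y. ennreal (norm (h y)) \<partial>?S) \<le> (\<integral>\<^sup>+y. ennreal B \<partial>?S)"
    by (rule nn_integral_mono_AE)
  hence bound: "(\<integral>\<^sup>+y. ennreal (norm (h y)) \<partial>?S) \<le> ennreal B * emeasure ?S UNIV"
    by simp
  moreover have "ennreal B * emeasure ?S UNIV < \<infinity>"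
    using finite_measure.emeasure_finite[OF finite_measure_sphere_measure[where 'a="(real^'n)^'m"]]
    by (simp add: ennreal_mult_less_top less_top)
  ultimately have "integrable ?S h"
    by (intro integrableI_bounded) (auto intro: le_less_trans)
  hence "sph_avg f x t = ennreal \<bar>integral\<^sup>L ?S h\<bar>"
    unfolding sph_avg_def Let_def h_def[symmetric] by simp
  also have "\<dots> \<le> (\<integral>\<^sup>+y. ennreal (norm (h y)) \<partial>?S)"
    using integral_norm_bound_ennreal[OF \<open>integrable ?S h\<close>] by simp
  also have "\<dots> \<le> ennreal B * emeasure ?S UNIV"
    by (rule bound)
  also have "ennreal B = (\<Prod>j\<in>UNIV. c j)"
    using fin by (simp add: B_def c_def prod_ennreal[symmetric] ennreal_enn2real less_top)
  finally show ?thesis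
    by (simp add: c_def mult.commute)
qed

lemma Lq_norm_top_multi_sph_max_le:
  fixes f :: "'m::finite \<Rightarrow> real^'n::finite \<Rightarrow> real"
  assumes m: "CARD('m) \<ge> 2" and f: "\<And>j. f j \<in> borel_measurable borel"
    and fin: "\<And>j. Lq_norm \<infinity> (\<lambda>x. ennreal \<bar>f j x\<bar>) < \<infinity>"
  shows "Lq_norm \<infinity> (multi_sph_max f) \<le> ennreal (measure (sphere_measure :: ((real^'n)^'m) measure) UNIV)
           * (\<Prod>j\<in>UNIV. Lq_norm \<infinity> (\<lambda>x. ennreal \<bar>f j x\<bar>))"
proof -
  have "sph_avg f x t \<le> emeasure (sphere_measure :: ((real^'n)^'m) measure) UNIV
           * (\<Prod>j\<in>UNIV. ess_sup_enn (\<lambda>x. ennreal \<bar>f j x\<bar>))" if "t > 0" for x t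
    using fin by (intro sph_avg_le_prod_ess_sup m f that) (simp add: Lq_norm_def)
  hence "multi_sph_max f x \<le> ennreal (measure (sphere_measure :: ((real^'n)^'m) measure) UNIV)
           * (\<Prod>j\<in>UNIV. ess_sup_enn (\<lambda>x. ennreal \<bar>f j x\<bar>))" for x
    unfolding multi_sph_max_def
    by (auto intro!: SUP_least simp: finite_measure.emeasure_eq_measure[OF finite_measure_sphere_measure])
  thus ?thesis
    by (simp add: Lq_norm_def ess_sup_enn_le)
qed

section \<open>A lower bound for the maximal function of indicator data\<close>

lemma norm_sgn_diff_le:
  fixes a b :: "'a::real_normed_vector"
  assumes "b \<noteq> 0"
  shows "norm (sgn a - sgn b) \<le> 2 * norm (a - b) / norm b"
proof (cases "a = 0")
  case True
  thus ?thesis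
    using assms by (simp add: norm_sgn)
next
  case False
  have "1 / norm a - 1 / norm b = (norm b - norm a) / (norm a * norm b)"
    using False assms by (simp add: field_simps)
  moreover have "sgn a - sgn b = (a - b) /\<^sub>R norm b + (1 / norm a - 1 / norm b) *\<^sub>R a"
    by (simp add: sgn_div_norm scaleR_diff_right scaleR_diff_left divide_inverse)
  ultimately have eq: "sgn a - sgn b = (a - b) /\<^sub>R norm b + ((norm b - norm a) / (norm a * norm b)) *\<^sub>R a"
    by simp
  have "norm (sgn a - sgn b) \<le>
      norm ((a - b) /\<^sub>R norm b) + norm (((norm b - norm a) / (norm a * norm b)) *\<^sub>R a)"
    unfolding eq by (rule norm_triangle_ineq)
  also have "norm ((a - b) /\<^sub>R norm b) = norm (a - b) / norm b"
    by (simp add: divide_inverse mult.commute)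
  also have "norm (((norm b - norm a) / (norm a * norm b)) *\<^sub>R a) = \<bar>norm b - norm a\<bar> / norm b"
    using False assms by (simp add: abs_mult)
  also have "\<bar>norm b - norm a\<bar> / norm b \<le> norm (a - b) / norm b"
    by (intro divide_right_mono) (auto simp: norm_triangle_ineq3 abs_minus_commute)
  finally show ?thesis
    by simp
qed

lemma squash_eq_fst_sgn: "squash r b = fst (sgn (b, r))"
  by (simp add: squash_def sgn_div_norm norm_Pair)

lemma norm_squash_diff_le:
  fixes u u' :: "'a::real_normed_vector"
  assumes \<rho>: "\<rho> > 0"
  shows "norm (squash \<rho> u - squash \<rho> u') \<le> 2 * norm (u - u') / \<rho>"
proof -
  have "norm (fst d) \<le> norm d" for d :: "'a \<times> real"
    using norm_fst_le[of "fst d" "snd d"] by simp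
  from this[of "sgn (u, \<rho>) - sgn (u', \<rho>)"]
  have "norm (squash \<rho> u - squash \<rho> u') \<le> norm (sgn (u, \<rho>) - sgn (u', \<rho>))"
    by (simp add: squash_eq_fst_sgn)
  also have "\<dots> \<le> 2 * norm ((u, \<rho>) - (u', \<rho>)) / norm (u', \<rho>)"
    using \<rho> by (intro norm_sgn_diff_le) (simp add: zero_prod_def)
  also have "\<dots> = 2 * norm (u - u') / norm (u', \<rho>)"
    by (simp add: norm_Pair)
  also have "\<dots> \<le> 2 * norm (u - u') / \<rho>"
    using \<rho> norm_snd_le[of \<rho> u'] by (intro divide_left_mono mult_pos_pos) auto
  finally show ?thesis .
qed

lemma norm_le_DIM_mult_coord_bound:
  fixes y :: "'a::euclidean_space^'m::finite"
  assumes "\<And>i v. v \<in> Basis \<Longrightarrow> \<bar>y$i \<bullet> v\<bar> \<le> e"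
  shows "norm y \<le> real DIM('a^'m) * e"
proof -
  have "norm y \<le> (\<Sum>b\<in>Basis. \<bar>y \<bullet> b\<bar>)"
    by (rule norm_le_l1)
  also have "\<dots> \<le> real (card (Basis::('a^'m) set)) * e"
    using assms by (intro sum_bounded_above) (auto simp: Basis_vec_def inner_axis)
  finally show ?thesis
    by simp
qed

lemma abs_inner_vec_nth_le_norm:
  fixes y :: "'a::euclidean_space^'m::finite"
  assumes "v \<in> Basis"
  shows "\<bar>y$i \<bullet> v\<bar> \<le> norm y"
  using Basis_le_norm[of "axis i v" y] assms by (auto simp: Basis_vec_def inner_axis)

text \<open>For the indicator data below, the spherical average at \<open>(x, t)\<close> is the sphere measure of
  the directions \<open>y\<close> with \<open>|x - t y\<^sup>j| \<le> 1\<close> for all \<open>j \<in> K\<close>; by the definition of the sphere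
  measure this is \<open>dim\<close> times the Lebesgue measure of the truncated cone below.\<close>

definition hitting_cone :: "'m set \<Rightarrow> 'a::real_normed_vector \<Rightarrow> real \<Rightarrow> ('a^'m) set" where
  "hitting_cone K x t = {z. z \<in> ball 0 1 \<and> z \<noteq> 0 \<and> (\<forall>j\<in>K. norm (x - t *\<^sub>R (sgn z $ j)) \<le> 1)}"

lemma sets_borel_hitting_cone [measurable]:
  "hitting_cone K x t \<in> sets (borel :: ('a::euclidean_space^'m::finite) measure)"
  unfolding hitting_cone_def by measurable

lemma vec_merge_in_hitting_cone:
  fixes a c w :: "'a::euclidean_space^'m::finite"
  assumes r: "r = norm (vec_merge K 0 w)" "0 < r" "r \<le> 1/4" and t: "t \<ge> 1"
    and c: "norm (vec_merge K c 0) = r" "\<And>j. j \<in> K \<Longrightarrow> t *\<^sub>R squash r (vec_merge K c 0) $ j = x"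
    and a: "norm (vec_merge K a 0 - vec_merge K c 0) \<le> r / (2 * t)"
  shows "vec_merge K a w \<in> hitting_cone K x t"
proof -
  let ?aK = "vec_merge K a 0" and ?cK = "vec_merge K c 0"
  have nz: "norm (vec_merge K a w) = sqrt (norm ?aK ^ 2 + r ^ 2)"
    using norm_vec_merge_power2[of K a w] r(1) by (metis norm_ge_zero real_sqrt_unique)
  have "r / (2 * t) \<le> 1/8"
    using r t by (simp add: field_simps)
  hence "norm ?aK \<le> 3/8"
    using norm_triangle_ineq2[of ?aK ?cK] a c(1) r by linarith
  hence "norm ?aK ^ 2 + r ^ 2 \<le> (3/8) ^ 2 + (1/4) ^ 2"
    using r by (intro add_mono power_mono) auto
  hence "norm ?aK ^ 2 + r ^ 2 < 1"
    by (simp add: power2_eq_square)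
  moreover have "norm (vec_merge K a w) \<ge> r"
    unfolding nz by (intro real_le_rsqrt) simp
  hence "vec_merge K a w \<noteq> 0"
    using r(2) by auto
  moreover have "norm (x - t *\<^sub>R sgn (vec_merge K a w) $ j) \<le> 1" if j: "j \<in> K" for j
  proof -
    have "x - t *\<^sub>R sgn (vec_merge K a w) $ j = t *\<^sub>R (squash r ?cK - squash r ?aK) $ j"
      using c(2)[OF j] sgn_vec_merge_nth[OF j, of a w] r(1) by (simp add: scaleR_diff_right)
    also have "norm \<dots> \<le> t * norm (squash r ?cK - squash r ?aK)"
      using t Finite_Cartesian_Product.norm_nth_le[of "squash r ?cK - squash r ?aK" j]
      by (simp add: mult_left_mono)
    also have "\<dots> \<le> t * (2 * norm (?aK - ?cK) / r)"
      using t norm_squash_diff_le[OF r(2), of ?cK ?aK]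
      by (intro mult_left_mono) (auto simp: norm_minus_commute)
    also have "\<dots> \<le> 1"
      using a r t by (simp add: field_simps)
    finally show ?thesis .
  qed
  ultimately show ?thesis
    by (auto simp: hitting_cone_def nz real_sqrt_lt_1_iff)
qed

lemma prod_Basis_if_const:
  "(\<Prod>i\<in>(UNIV::'m::finite set). \<Prod>v\<in>(Basis::'a::euclidean_space set). if i \<in> K then X else Y)
     = X ^ (DIM('a) * card K) * Y ^ (DIM('a) * card (- K))"
proof -
  have "(\<Prod>i\<in>(UNIV::'m set). \<Prod>v\<in>(Basis::'a set). if i \<in> K then X else Y)
      = (\<Prod>i\<in>(UNIV::'m set). if i \<in> K then X ^ DIM('a) else Y ^ DIM('a))"
    by (intro prod.cong) auto
  thus ?thesis
    by (simp add: prod.If_cases power_mult Compl_eq_Diff_UNIV)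
qed

lemma vec_merge_centre:
  fixes x :: "'a::euclidean_space" and K :: "'m::finite set"
  assumes K: "K \<noteq> {}" and x: "x \<noteq> 0" and r: "r > 0"
  defines "c \<equiv> (\<chi> _::'m. (r / (sqrt (card K) * norm x)) *\<^sub>R x)"
  shows "norm (vec_merge K c 0) = r"
    and "j \<in> K \<Longrightarrow> (sqrt (2 * card K) * norm x) *\<^sub>R squash r (vec_merge K c 0) $ j = x"
proof -
  define s where "s = r / (sqrt (card K) * norm x)"
  have c: "c = (\<chi> _. s *\<^sub>R x)"
    by (simp add: c_def s_def)
  have k: "card K > 0"
    using K by (simp add: card_gt_0_iff)
  have "norm (vec_merge K c 0) ^ 2 = (\<Sum>i\<in>UNIV. if i \<in> K then (s * norm x) ^ 2 else 0)"
    by (subst norm_vec_power2) (auto simp: c power_mult_distrib intro!: sum.cong)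
  also have "\<dots> = r ^ 2"
    using K k x by (simp add: sum.If_cases s_def power_divide power_mult_distrib)
  finally show nc: "norm (vec_merge K c 0) = r"
    using r by (metis norm_ge_zero power2_eq_imp_eq less_imp_le)
  assume j: "j \<in> K"
  have "sqrt (norm (vec_merge K c 0) ^ 2 + r ^ 2) = sqrt 2 * r"
    using r by (simp add: nc real_sqrt_mult flip: mult_2)
  hence "squash r (vec_merge K c 0) $ j = (s / (sqrt 2 * r)) *\<^sub>R x"
    using j by (simp add: squash_def c field_simps)
  moreover have "sqrt (2 * card K) * norm x * (s / (sqrt 2 * r)) = 1"
    using K k x r by (simp add: s_def real_sqrt_mult field_simps)
  ultimately show "(sqrt (2 * card K) * norm x) *\<^sub>R squash r (vec_merge K c 0) $ j = x"
    by (simp only: scaleR_scaleR) simp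
qed

lemma norm_vec_merge_outer_box_bounds:
  fixes w :: "'a::euclidean_space^'m::finite" and \<alpha> :: real
  assumes KU: "K \<noteq> UNIV" and \<alpha>: "\<alpha> > 0"
    and w: "w \<in> box (vec_merge K 0 (\<chi> _. \<alpha> *\<^sub>R One)) (vec_merge K One (\<chi> _. (2*\<alpha>) *\<^sub>R One))"
  shows "\<alpha> < norm (vec_merge K 0 w)" and "norm (vec_merge K 0 w) \<le> DIM('a^'m) * (2 * \<alpha>)"
proof -
  have wR: "\<alpha> < w$i \<bullet> v \<and> w$i \<bullet> v < 2 * \<alpha>" if "i \<notin> K" "v \<in> Basis" for i v
  proof -
    have "w$i \<in> box (vec_merge K 0 (\<chi> _. \<alpha> *\<^sub>R One) $ i) (vec_merge K One (\<chi> _. (2*\<alpha>) *\<^sub>R One) $ i)"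
      using w mem_box_vec by blast
    thus ?thesis
      using that by (simp add: mem_box)
  qed
  obtain i0 where i0: "i0 \<notin> K"
    using KU by blast
  obtain v0 :: 'a where v0: "v0 \<in> Basis"
    using nonempty_Basis by blast
  show "\<alpha> < norm (vec_merge K 0 w)"
    using wR[OF i0 v0] abs_inner_vec_nth_le_norm[OF v0, of "vec_merge K 0 w" i0] i0 by simp
  show "norm (vec_merge K 0 w) \<le> DIM('a^'m) * (2 * \<alpha>)"
  proof (rule norm_le_DIM_mult_coord_bound)
    fix i and v :: 'a
    assume "v \<in> Basis"
    thus "\<bar>vec_merge K 0 w $ i \<bullet> v\<bar> \<le> 2 * \<alpha>"
      using wR[of i v] \<alpha> by (cases "i \<in> K") auto
  qed
qed

lemma norm_vec_merge_diff_le_of_mem_box: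
  fixes a c :: "'a::euclidean_space^'m::finite" and \<delta> :: real
  assumes a: "a \<in> box (vec_merge K (c - \<delta> *\<^sub>R One) l) (vec_merge K (c + \<delta> *\<^sub>R One) u)"
    and \<delta>: "\<delta> \<ge> 0"
  shows "norm (vec_merge K a 0 - vec_merge K c 0) \<le> DIM('a^'m) * \<delta>"
proof (rule norm_le_DIM_mult_coord_bound)
  fix i and v :: 'a
  assume v: "v \<in> Basis"
  show "\<bar>(vec_merge K a 0 - vec_merge K c 0) $ i \<bullet> v\<bar> \<le> \<delta>"
  proof (cases "i \<in> K")
    case True
    have "a$i \<in> box (vec_merge K (c - \<delta> *\<^sub>R One) l $ i) (vec_merge K (c + \<delta> *\<^sub>R One) u $ i)"
      using a mem_box_vec by blast
    hence "c$i \<bullet> v - \<delta> < a$i \<bullet> v \<and> a$i \<bullet> v < c$i \<bullet> v + \<delta>"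
      using True v by (simp add: mem_box inner_diff_left inner_add_left)
    thus ?thesis
      using True by (simp add: inner_diff_left abs_le_iff)
  qed (simp add: \<delta>)
qed

lemma vec_merge_swap_mem_unit_box:
  fixes a w :: "'a::euclidean_space^'m::finite"
  assumes "w \<in> box (vec_merge K 0 l) (vec_merge K One u)"
    and "a \<in> box (vec_merge K l' 0) (vec_merge K u' One)"
  shows "vec_merge K w a \<in> box 0 One"
proof -
  have "vec_merge K w a $ i \<in> box ((0::'a^'m) $ i) ((One::'a^'m) $ i)" for i
  proof -
    have "w$i \<in> box (vec_merge K 0 l $ i) (vec_merge K One u $ i)"
      using assms(1) mem_box_vec by blast
    moreover have "a$i \<in> box (vec_merge K l' 0 $ i) (vec_merge K u' One $ i)"
      using assms(2) mem_box_vec by blast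
    ultimately show ?thesis
      by (cases "i \<in> K") (simp_all only: vec_merge_nth if_True if_False)
  qed
  thus ?thesis
    by (simp only: mem_box_vec) blast
qed

lemma emeasure_lborel_box_vec_merge:
  fixes c :: "'a::euclidean_space^'m::finite" and \<delta> :: real
  assumes "\<delta> > 0"
  shows "emeasure lborel (box (vec_merge K (c - \<delta> *\<^sub>R One) 0) (vec_merge K (c + \<delta> *\<^sub>R One) One))
           = ennreal ((2 * \<delta>) ^ (DIM('a) * card K))"
proof -
  have "emeasure lborel (box (vec_merge K (c - \<delta> *\<^sub>R One) 0) (vec_merge K (c + \<delta> *\<^sub>R One) One))
      = ennreal (\<Prod>i\<in>(UNIV::'m set). \<Prod>v\<in>(Basis::'a set). if i \<in> K then 2 * \<delta> else 1)"
    using assms by (subst emeasure_lborel_box_vec)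
      (auto simp: inner_diff_left inner_add_left intro!: prod.cong arg_cong[where f=ennreal])
  also have "\<dots> = ennreal ((2 * \<delta>) ^ (DIM('a) * card K) * 1 ^ (DIM('a) * card (- K)))"
    by (simp only: prod_Basis_if_const)
  finally show ?thesis
    by simp
qed

lemma hitting_cone_fiber_lower_bound:
  fixes K :: "'m::finite set" and x :: "'a::euclidean_space" and t \<alpha> \<delta> :: real
  assumes KU: "K \<noteq> UNIV" and K: "K \<noteq> {}" and x: "norm x \<ge> 1"
  defines "t \<equiv> sqrt (2 * card K) * norm x"
    and "\<alpha> \<equiv> 1 / (8 * DIM('a^'m))" and "\<delta> \<equiv> \<alpha> / (2 * t * DIM('a^'m))"
  assumes w: "w \<in> box (vec_merge K 0 (\<chi> _. \<alpha> *\<^sub>R One)) (vec_merge K One (\<chi> _. (2*\<alpha>) *\<^sub>R One))"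
  shows "ennreal ((2 * \<delta>) ^ (DIM('a) * card K)) \<le>
    (\<integral>\<^sup>+a. indicator (hitting_cone K x t) (vec_merge K a w) * indicator (box 0 One) (vec_merge K w a) \<partial>lborel)"
proof -
  let ?D = "real DIM('a^'m)"
  have D: "?D \<ge> 1"
    using DIM_positive[where 'a="'a^'m"] by linarith
  have "card K \<ge> 1"
    using K by (simp add: card_gt_0_iff Suc_le_eq)
  hence "sqrt (2 * card K) \<ge> 1"
    by simp
  hence t: "t \<ge> 1"
    using x mult_mono[of 1 "sqrt (2 * card K)" 1 "norm x"] by (simp add: t_def)
  have \<alpha>: "\<alpha> > 0" "\<alpha> * ?D = 1/8"
    using D by (simp_all add: \<alpha>_def)
  have \<delta>: "\<delta> > 0" "?D * \<delta> = \<alpha> / (2 * t)"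
    using \<alpha> t D by (simp_all add: \<delta>_def field_simps)
  define r where "r = norm (vec_merge K 0 w)"
  have r: "\<alpha> < r" "r \<le> 1/4"
    using norm_vec_merge_outer_box_bounds[OF KU \<alpha>(1) w] \<alpha> by (simp_all add: r_def algebra_simps)
  define c where "c = (\<chi> _::'m. (r / (sqrt (card K) * norm x)) *\<^sub>R x)"
  have "x \<noteq> 0" "r > 0"
    using x r(1) \<alpha>(1) by (auto simp del: norm_eq_zero)
  note centre = vec_merge_centre[OF K this, folded c_def t_def]
  let ?B = "box (vec_merge K (c - \<delta> *\<^sub>R One) 0) (vec_merge K (c + \<delta> *\<^sub>R One) One)"
  have "indicator ?B a \<le>
      indicator (hitting_cone K x t) (vec_merge K a w) * (indicator (box 0 One) (vec_merge K w a) :: ennreal)"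
    for a
  proof (cases "a \<in> ?B")
    case True
    have "norm (vec_merge K a 0 - vec_merge K c 0) \<le> ?D * \<delta>"
      using True \<delta>(1) by (intro norm_vec_merge_diff_le_of_mem_box) simp_all
    also have "\<dots> \<le> r / (2 * t)"
      using \<delta> r t by (simp add: divide_right_mono)
    finally have "vec_merge K a w \<in> hitting_cone K x t"
      using \<open>r > 0\<close> r t centre by (intro vec_merge_in_hitting_cone[where c=c]) (auto simp: r_def)
    moreover have "vec_merge K w a \<in> box 0 One"
      using w True by (rule vec_merge_swap_mem_unit_box)
    ultimately show ?thesis
      by (simp add: indicator_def)
  qed simp
  hence "(\<integral>\<^sup>+a. indicator ?B a \<partial>lborel) \<le>
      (\<integral>\<^sup>+a. indicator (hitting_cone K x t) (vec_merge K a w) * indicator (box 0 One) (vec_merge K w a) \<partial>lborel)"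
    by (intro nn_integral_mono)
  thus ?thesis
    using \<delta> by (simp add: emeasure_lborel_box_vec_merge)
qed

lemma emeasure_hitting_cone_ge:
  fixes K :: "'m::finite set" and x :: "'a::euclidean_space" and t \<alpha> \<delta> :: real
  assumes KU: "K \<noteq> UNIV" and K: "K \<noteq> {}" and x: "norm x \<ge> 1"
  defines "t \<equiv> sqrt (2 * card K) * norm x"
    and "\<alpha> \<equiv> 1 / (8 * DIM('a^'m))" and "\<delta> \<equiv> \<alpha> / (2 * t * DIM('a^'m))"
  shows "ennreal (\<alpha> ^ (DIM('a) * card (- K)) * (2 * \<delta>) ^ (DIM('a) * card K))
           \<le> emeasure lborel (hitting_cone K x t)"
proof -
  let ?W = "box (vec_merge K 0 (\<chi> _. \<alpha> *\<^sub>R One)) (vec_merge K One (\<chi> _. (2*\<alpha>) *\<^sub>R One)) :: ('a^'m) set"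
  have \<alpha>: "\<alpha> > 0"
    by (simp add: \<alpha>_def)
  have \<delta>: "\<delta> \<ge> 0"
    by (simp add: \<delta>_def \<alpha>_def t_def)
  have "emeasure lborel ?W = ennreal (\<alpha> ^ (DIM('a) * card (- K)))"
  proof -
    have "emeasure lborel ?W = ennreal (\<Prod>i\<in>(UNIV::'m set). \<Prod>v\<in>(Basis::'a set). if i \<in> K then 1 else \<alpha>)"
      using \<alpha> by (subst emeasure_lborel_box_vec)
        (auto simp: inner_diff_left intro!: prod.cong arg_cong[where f=ennreal])
    also have "\<dots> = ennreal (1 ^ (DIM('a) * card K) * \<alpha> ^ (DIM('a) * card (- K)))"
      by (simp only: prod_Basis_if_const)
    finally show ?thesis
      by simp
  qed
  hence "ennreal (\<alpha> ^ (DIM('a) * card (- K)) * (2 * \<delta>) ^ (DIM('a) * card K))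
      = (\<integral>\<^sup>+w. indicator ?W w * ennreal ((2 * \<delta>) ^ (DIM('a) * card K)) \<partial>lborel)"
    using \<alpha> \<delta> by (simp add: nn_integral_multc ennreal_mult)
  also have "\<dots> \<le> (\<integral>\<^sup>+w. \<integral>\<^sup>+a. indicator (hitting_cone K x t) (vec_merge K a w)
                    * indicator (box 0 One) (vec_merge K w a) \<partial>lborel \<partial>lborel)"
    using hitting_cone_fiber_lower_bound[OF KU K x] unfolding t_def \<alpha>_def \<delta>_def
    by (intro nn_integral_mono) (auto split: split_indicator)
  also have "\<dots> = emeasure lborel (hitting_cone K x t)"
    by (subst nn_integral_lborel_vec_merge[symmetric]) simp_all
  finally show ?thesis .
qed

lemma ball_subset_hitting_cone_UNIV:
  fixes x :: "'a::euclidean_space"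
  assumes x: "norm x \<ge> 1" and t_def: "t = sqrt CARD('m::finite) * norm x"
  shows "ball ((1/2) *\<^sub>R (\<chi> _::'m. (1/t) *\<^sub>R x)) (1 / (4 * t)) \<subseteq> hitting_cone UNIV x t"
proof
  define w0 where "w0 = (\<chi> _::'m. (1/t) *\<^sub>R x)"
  define z0 where "z0 = (1/2::real) *\<^sub>R w0"
  have t: "t \<ge> 1"
    using x mult_mono[of 1 "sqrt CARD('m)" 1 "norm x"] by (simp add: t_def)
  have "norm w0 ^ 2 = CARD('m) * (norm x / t) ^ 2"
    using t by (subst norm_vec_power2) (simp add: w0_def divide_inverse mult.commute)
  also have "\<dots> = 1"
    using x by (auto simp: t_def power_divide power_mult_distrib)
  finally have "norm w0 = 1"
    using norm_ge_zero[of w0] by (auto simp: power2_eq_1_iff)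
  hence nz0: "norm z0 = 1/2" and sz0: "sgn z0 = w0"
    by (simp_all add: z0_def sgn_div_norm)
  fix z assume "z \<in> ball ((1/2) *\<^sub>R (\<chi> _::'m. (1/t) *\<^sub>R x)) (1 / (4 * t))"
  hence dz: "norm (z - z0) < 1 / (4 * t)"
    by (simp add: z0_def w0_def dist_norm norm_minus_commute)
  have "1 / (4 * t) \<le> 1/4"
    using t by (simp add: field_simps)
  hence "norm z < 1" "z \<noteq> 0"
    using norm_triangle_sub[of z z0] norm_triangle_sub[of z0 z] nz0 dz
    by (auto simp: norm_minus_commute)
  moreover have "norm (x - t *\<^sub>R (sgn z $ j)) \<le> 1" for j
  proof -
    have "x - t *\<^sub>R (sgn z $ j) = t *\<^sub>R ((w0 - sgn z) $ j)"
      using t by (simp add: w0_def scaleR_diff_right)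
    hence "norm (x - t *\<^sub>R (sgn z $ j)) = t * norm ((w0 - sgn z) $ j)"
      using t by simp
    also have "\<dots> \<le> t * norm (sgn z - sgn z0)"
      using t Finite_Cartesian_Product.norm_nth_le[of "w0 - sgn z" j]
      by (intro mult_left_mono) (auto simp: sz0 norm_minus_commute)
    also have "\<dots> \<le> t * (4 * (1 / (4 * t)))"
      using norm_sgn_diff_le[of z0 z] nz0 dz t by (intro mult_left_mono) force+
    also have "\<dots> = 1"
      using t by simp
    finally show ?thesis .
  qed
  ultimately show "z \<in> hitting_cone UNIV x t"
    by (simp add: hitting_cone_def)
qed

lemma emeasure_hitting_cone_UNIV_ge:
  fixes x :: "'a::euclidean_space" and t :: real
  assumes x: "norm x \<ge> 1"
  defines "t \<equiv> sqrt CARD('m::finite) * norm x"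
  shows "ennreal (unit_ball_vol DIM('a^'m) * (1 / (4 * t)) ^ DIM('a^'m))
           \<le> emeasure lborel (hitting_cone (UNIV :: 'm set) x t)"
proof -
  have "t > 0"
    unfolding t_def using less_le_trans[OF zero_less_one x] by simp
  have "emeasure lborel (ball ((1/2) *\<^sub>R (\<chi> _::'m. (1/t) *\<^sub>R x)) (1 / (4 * t)))
      \<le> emeasure lborel (hitting_cone (UNIV :: 'm set) x t)"
    using ball_subset_hitting_cone_UNIV[OF x meta_eq_to_obj_eq[OF t_def]] by (rule emeasure_mono) simp
  thus ?thesis
    using \<open>t > 0\<close> by (simp add: emeasure_ball)
qed

lemma emeasure_hitting_cone_lower_bound:
  fixes K :: "'m::finite set"
  assumes K: "K \<noteq> {}"
  obtains c where "c > 0"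
    and "\<And>x::'a::euclidean_space. norm x \<ge> 1 \<Longrightarrow>
           \<exists>t>0. ennreal (c / norm x ^ (DIM('a) * card K)) \<le> emeasure lborel (hitting_cone K x t)"
proof (cases "K = UNIV")
  case True
  let ?D = "DIM('a^'m)"
  define c where "c = unit_ball_vol ?D * (1 / (4 * sqrt CARD('m))) ^ ?D"
  show ?thesis
  proof (rule that)
    show "c > 0"
      by (simp add: c_def)
    fix x :: 'a assume "norm x \<ge> 1"
    hence x: "norm x \<ge> 1" "norm x > 0"
      by linarith+
    define t where "t = sqrt CARD('m) * norm x"
    have "t > 0"
      using x by (simp add: t_def)
    moreover have "c / norm x ^ (DIM('a) * card K) = unit_ball_vol ?D * (1 / (4 * t)) ^ ?D"
      using x by (simp add: c_def t_def True power_divide power_mult_distrib field_simps)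
    ultimately show "\<exists>t>0. ennreal (c / norm x ^ (DIM('a) * card K)) \<le> emeasure lborel (hitting_cone K x t)"
      using emeasure_hitting_cone_UNIV_ge[OF x(1), where 'm='m] unfolding True t_def by auto
  qed
next
  case False
  let ?D = "DIM('a^'m)"
  define \<alpha> where "\<alpha> = 1 / (8 * ?D)"
  define c where "c = \<alpha> ^ (DIM('a) * card (- K)) * (\<alpha> / (?D * sqrt (2 * card K))) ^ (DIM('a) * card K)"
  have k: "card K > 0"
    using K by (simp add: card_gt_0_iff)
  show ?thesis
  proof (rule that)
    show "c > 0"
      using k by (simp add: c_def \<alpha>_def)
    fix x :: 'a assume "norm x \<ge> 1"
    hence x: "norm x \<ge> 1" "norm x > 0"
      by linarith+
    define t where "t = sqrt (2 * card K) * norm x"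
    define \<delta> where "\<delta> = \<alpha> / (2 * t * ?D)"
    have "t > 0"
      using x k by (simp add: t_def)
    moreover have "2 * \<delta> = \<alpha> / (?D * sqrt (2 * card K)) / norm x"
      using x by (simp add: \<delta>_def t_def field_simps)
    hence "c / norm x ^ (DIM('a) * card K) = \<alpha> ^ (DIM('a) * card (- K)) * (2 * \<delta>) ^ (DIM('a) * card K)"
      by (simp add: c_def power_divide power_mult_distrib)
    ultimately show "\<exists>t>0. ennreal (c / norm x ^ (DIM('a) * card K)) \<le> emeasure lborel (hitting_cone K x t)"
      using emeasure_hitting_cone_ge[OF False K x(1)]
      unfolding t_def[symmetric] \<alpha>_def[symmetric] \<delta>_def[symmetric]
      by auto
  qed
qed

definition ball_test :: "'m set \<Rightarrow> 'm \<Rightarrow> 'a::euclidean_space \<Rightarrow> real" where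
  "ball_test K j = (if j \<in> K then indicator (cball 0 1) else (\<lambda>_. 1))"

lemma borel_measurable_ball_test [measurable]: "ball_test K j \<in> borel_measurable borel"
  by (simp add: ball_test_def borel_measurable_indicator)

lemma emeasure_hitting_cone_le_sph_avg:
  fixes K :: "'m::finite set" and x :: "real^'n::finite"
  assumes t: "t > 0"
  shows "emeasure lborel (hitting_cone K x t) \<le> sph_avg (ball_test K) x t"
proof -
  let ?S = "sphere_measure :: ((real^'n)^'m) measure"
  define h where "h = (\<lambda>y::(real^'n)^'m. \<Prod>j\<in>UNIV. ball_test K j (x - t *\<^sub>R (y $ j)))"
  have [measurable]: "h \<in> borel_measurable borel"
    unfolding h_def by measurable
  have h: "0 \<le> h y \<and> h y \<le> 1" for y
    unfolding h_def ball_test_def by (auto intro!: prod_nonneg prod_le_1 split: split_indicator)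
  interpret finite_measure ?S
    by (rule finite_measure_sphere_measure)
  have int: "integrable ?S h"
    using h by (intro integrable_const_bound[where B=1]) auto
  have "h (sgn z) = 1" if "z \<in> hitting_cone K x t" for z
    using that unfolding h_def
    by (intro prod.neutral) (auto simp: ball_test_def hitting_cone_def dist_norm norm_minus_commute)
  moreover have "1 \<le> (of_nat DIM((real^'n)^'m) :: ennreal)"
    using DIM_positive[where 'a="(real^'n)^'m"] by (metis Suc_le_eq of_nat_1 of_nat_le_iff One_nat_def)
  ultimately have "indicator (hitting_cone K x t) z \<le>
      of_nat DIM((real^'n)^'m) * (indicator (ball 0 1) z * ennreal (h (sgn z)))" for z
    by (auto simp: hitting_cone_def split: split_indicator)
  hence "emeasure lborel (hitting_cone K x t) \<le> (\<integral>\<^sup>+y. ennreal (h y) \<partial>?S)"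
    by (subst nn_integral_sphere_measure) (auto intro!: nn_integral_mono simp flip: nn_integral_indicator)
  also have "\<dots> = ennreal (integral\<^sup>L ?S h)"
    using h by (intro nn_integral_eq_integral int) auto
  also have "\<dots> = sph_avg (ball_test K) x t"
    using int h Bochner_Integration.integral_nonneg[of ?S h]
    unfolding sph_avg_def Let_def h_def[symmetric] by simp
  finally show ?thesis .
qed

lemma multi_sph_max_ball_test_lower_bound:
  fixes K :: "'m::finite set"
  assumes K: "K \<noteq> {}"
  obtains c where "c > 0"
    and "\<And>x::real^'n::finite. norm x \<ge> 1 \<Longrightarrow>
           ennreal (c / norm x ^ (CARD('n) * card K)) \<le> multi_sph_max (ball_test K) x"
proof -
  obtain c where "c > 0" and c: "\<And>x::real^'n. norm x \<ge> 1 \<Longrightarrow>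
      \<exists>t>0. ennreal (c / norm x ^ (DIM(real^'n) * card K)) \<le> emeasure lborel (hitting_cone K x t)"
    using emeasure_hitting_cone_lower_bound[OF K] by blast
  have "ennreal (c / norm x ^ (CARD('n) * card K)) \<le> multi_sph_max (ball_test K) x"
    if x: "norm x \<ge> 1" for x :: "real^'n"
  proof -
    obtain t where "t > 0"
      and "ennreal (c / norm x ^ (CARD('n) * card K)) \<le> emeasure lborel (hitting_cone K x t)"
      using c[OF x] by auto
    moreover have "sph_avg (ball_test K) x t \<le> multi_sph_max (ball_test K) x"
      unfolding multi_sph_max_def using \<open>t > 0\<close> by (intro SUP_upper) auto
    ultimately show ?thesis
      using emeasure_hitting_cone_le_sph_avg[of t K x] by (meson order_trans)
  qed
  thus ?thesis
    using that \<open>c > 0\<close> by blast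
qed

section \<open>Divergence at infinity\<close>

lemma nn_integral_dyadic_shell_ge:
  fixes N :: nat
  defines "S \<equiv> {x::'a::euclidean_space. 2^N \<le> norm x \<and> norm x < 2^Suc N}"
  shows "ennreal (unit_ball_vol DIM('a) * (1 - 1 / 2 ^ DIM('a)))
           \<le> (\<integral>\<^sup>+x. ennreal (1 / norm x ^ DIM('a)) * indicator S x \<partial>lborel)"
proof -
  let ?d = "DIM('a)" and ?V = "unit_ball_vol DIM('a)" and ?R = "(2::real) ^ Suc N"
  have [measurable]: "S \<in> sets borel"
    unfolding S_def by measurable
  have "emeasure lborel S = emeasure lborel (ball (0::'a) ?R) - emeasure lborel (ball (0::'a) (2^N))"
  proof -
    have "S = ball 0 ?R - ball 0 (2^N)"
      by (auto simp: S_def)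
    moreover have "ball (0::'a) (2^N) \<subseteq> ball 0 ?R"
      by (intro subset_ball) simp
    ultimately show ?thesis
      using emeasure_lborel_ball_finite[of "0::'a" "2^N"] by (simp add: emeasure_Diff less_top)
  qed
  also have "\<dots> = ennreal (?V * ?R ^ ?d - ?V * (2^N) ^ ?d)"
    by (simp add: emeasure_ball ennreal_minus)
  finally have S: "emeasure lborel S = ennreal (?V * ?R ^ ?d - ?V * (2^N) ^ ?d)" .
  have "?V * (2^N) ^ ?d \<le> ?V * ?R ^ ?d"
    by (intro mult_left_mono power_mono) auto
  hence "ennreal (?V * (1 - 1 / 2 ^ ?d)) = ennreal (1 / ?R ^ ?d) * emeasure lborel S"
    by (simp add: S ennreal_mult[symmetric] field_simps power_mult_distrib[symmetric]
        power_mult[symmetric] mult.commute)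
  also have "\<dots> = (\<integral>\<^sup>+x. ennreal (1 / ?R ^ ?d) * indicator S x \<partial>lborel)"
    by (simp add: nn_integral_cmult_indicator)
  also have "\<dots> \<le> (\<integral>\<^sup>+x. ennreal (1 / norm x ^ ?d) * indicator S x \<partial>lborel)"
  proof (intro nn_integral_mono)
    fix x :: 'a
    have "1 / ?R ^ ?d \<le> 1 / norm x ^ ?d" if "x \<in> S"
    proof -
      have "0 < norm x"
        using that less_le_trans[of 0 "2^N" "norm x"] by (simp add: S_def)
      thus ?thesis
        using that by (intro divide_left_mono power_mono) (auto simp: S_def)
    qed
    thus "ennreal (1 / ?R ^ ?d) * indicator S x \<le> ennreal (1 / norm x ^ ?d) * indicator S x"
      by (auto intro: ennreal_leI split: split_indicator)
  qed
  finally show ?thesis .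
qed

lemma nn_integral_inverse_norm_power_DIM_infinite:
  "(\<integral>\<^sup>+x. ennreal (1 / norm x ^ DIM('a)) * indicator {x::'a::euclidean_space. 1 \<le> norm x} x \<partial>lborel) = \<infinity>"
proof -
  let ?F = "\<lambda>x::'a. ennreal (1 / norm x ^ DIM('a))"
  define \<epsilon> where "\<epsilon> = unit_ball_vol DIM('a) * (1 - 1 / 2 ^ DIM('a))"
  define S where "S N = {x::'a. 2^N \<le> norm x \<and> norm x < 2^Suc N}" for N :: nat
  have \<epsilon>: "\<epsilon> > 0"
    by (simp add: \<epsilon>_def DIM_positive)
  have [measurable]: "S N \<in> sets borel" for N
    unfolding S_def by measurable
  have "S N \<inter> S N' = {}" if "N < N'" for N N'
    using that power_increasing[of "Suc N" N' "2::real"] by (auto simp: S_def)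
  hence "disjoint_family S"
    unfolding disjoint_family_on_def by (metis Int_commute nat_neq_iff)
  have "of_nat M * ennreal \<epsilon> \<le> (\<integral>\<^sup>+x. ?F x * indicator {x. 1 \<le> norm x} x \<partial>lborel)" for M :: nat
  proof -
    have "of_nat M * ennreal \<epsilon> \<le> (\<Sum>N<M. \<integral>\<^sup>+x. ?F x * indicator (S N) x \<partial>lborel)"
      using nn_integral_dyadic_shell_ge[where 'a='a] sum_mono[of "{..<M}" "\<lambda>_. ennreal \<epsilon>"]
      by (simp add: S_def \<epsilon>_def)
    also have "\<dots> = (\<integral>\<^sup>+x. (\<Sum>N<M. ?F x * indicator (S N) x) \<partial>lborel)"
      by (rule nn_integral_sum[symmetric]) simp
    also have "\<dots> = (\<integral>\<^sup>+x. ?F x * indicator (\<Union>N<M. S N) x \<partial>lborel)"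
    proof (intro nn_integral_cong)
      fix x :: 'a
      have "indicator (\<Union>N<M. S N) x = (\<Sum>N<M. indicator (S N) x :: ennreal)"
        using \<open>disjoint_family S\<close> by (intro indicator_UN_disjoint) (auto intro: disjoint_family_on_mono)
      thus "(\<Sum>N<M. ?F x * indicator (S N) x) = ?F x * indicator (\<Union>N<M. S N) x"
        by (simp add: sum_distrib_left)
    qed
    also have "\<dots> \<le> (\<integral>\<^sup>+x. ?F x * indicator {x. 1 \<le> norm x} x \<partial>lborel)"
    proof (intro nn_integral_mono mult_left_mono)
      have "1 \<le> norm x" if "2 ^ N \<le> norm x" for N and x :: 'a
        using that one_le_power[of "2::real" N] by linarith
      thus "indicator (\<Union>N<M. S N) x \<le> (indicator {x. 1 \<le> norm x} x :: ennreal)" for x :: 'a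
        by (auto simp: S_def split: split_indicator)
    qed simp
    finally show ?thesis .
  qed
  hence "(SUP M. of_nat M) * ennreal \<epsilon> \<le> (\<integral>\<^sup>+x. ?F x * indicator {x. 1 \<le> norm x} x \<partial>lborel)"
    by (simp add: SUP_mult_right_ennreal SUP_least)
  thus ?thesis
    using \<epsilon> by (simp add: ennreal_SUP_of_nat_eq_top ennreal_top_mult top_unique)
qed

section \<open>The \<open>L\<^sup>q\<close> norms\<close>

lemma enn_powr_ennreal: "x \<ge> 0 \<Longrightarrow> enn_powr (ennreal x) r = ennreal (x powr r)"
  by (simp add: enn_powr_def)

lemma enn_powr_mono:
  assumes "a \<le> b" "r \<ge> 0"
  shows "enn_powr a r \<le> enn_powr b r"
proof (cases "b = \<infinity>")
  case False
  hence "a \<noteq> \<infinity>" "enn2real a \<le> enn2real b"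
    using assms by (auto simp: top_unique enn2real_mono top.not_eq_extremum)
  thus ?thesis
    using False assms(2) by (simp add: enn_powr_def powr_mono2 ennreal_leI)
qed (simp add: enn_powr_def)

lemma Lq_norm_ball_test_less_top:
  fixes K :: "'m set"
  assumes p: "p = (if j \<in> K then 1 else \<infinity>)"
  shows "Lq_norm p (\<lambda>x::'a::euclidean_space. ennreal \<bar>ball_test K j x\<bar>) < \<infinity>"
proof (cases "j \<in> K")
  case True
  have "(\<integral>\<^sup>+x. enn_powr (ennreal \<bar>ball_test K j (x::'a)\<bar>) 1 \<partial>lborel) =
      (\<integral>\<^sup>+x. indicator (cball (0::'a) 1) x \<partial>lborel)"
    using True
    by (intro nn_integral_cong) (auto simp: ball_test_def enn_powr_ennreal split: split_indicator)
  thus ?thesis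
    using True p emeasure_lborel_cball_finite[of "0::'a" 1] by (simp add: Lq_norm_def enn_powr_def)
next
  case False
  have "ess_sup_enn (\<lambda>x::'a. ennreal \<bar>ball_test K j x\<bar>) \<le> 1"
    using False by (intro ess_sup_enn_le) (simp add: ball_test_def)
  thus ?thesis
    using False p by (simp add: Lq_norm_def le_less_trans)
qed

lemma Lq_norm_multi_sph_max_ball_test:
  fixes K :: "'m::finite set"
  assumes K: "K \<noteq> {}"
  shows "Lq_norm (inverse (of_nat (card K)))
           (multi_sph_max (ball_test K :: 'm \<Rightarrow> real^'n::finite \<Rightarrow> real)) = \<infinity>"
proof -
  let ?M = "multi_sph_max (ball_test K :: 'm \<Rightarrow> real^'n \<Rightarrow> real)" and ?k = "real (card K)"
  have k: "?k > 0"
    using K by (simp add: card_gt_0_iff)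
  obtain c where "c > 0"
    and c: "\<And>x::real^'n. norm x \<ge> 1 \<Longrightarrow> ennreal (c / norm x ^ (CARD('n) * card K)) \<le> ?M x"
    using multi_sph_max_ball_test_lower_bound[OF K] by blast
  have "ennreal (c powr (1 / ?k)) * (ennreal (1 / norm x ^ DIM(real^'n)) * indicator {x. 1 \<le> norm x} x)
      \<le> enn_powr (?M x) (1 / ?k)" for x :: "real^'n"
  proof (cases "1 \<le> norm x")
    case True
    have x: "norm x > 0"
      using True by linarith
    have "(norm x ^ (CARD('n) * card K)) powr (1 / ?k) =
        norm x powr (real (CARD('n) * card K) * (1 / ?k))"
      using x by (simp add: powr_powr powr_realpow[symmetric])
    also have "\<dots> = norm x ^ CARD('n)"
      using x K k by (simp add: powr_realpow)
    finally have "(c / norm x ^ (CARD('n) * card K)) powr (1 / ?k) =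
        c powr (1 / ?k) * (1 / norm x ^ CARD('n))"
      using \<open>c > 0\<close> by (simp add: powr_divide)
    hence "ennreal (c powr (1 / ?k)) * ennreal (1 / norm x ^ CARD('n))
        = enn_powr (ennreal (c / norm x ^ (CARD('n) * card K))) (1 / ?k)"
      using True \<open>c > 0\<close> by (simp add: enn_powr_ennreal ennreal_mult[symmetric])
    also have "\<dots> \<le> enn_powr (?M x) (1 / ?k)"
      using c[OF True] k by (intro enn_powr_mono) simp_all
    finally show ?thesis
      using True by simp
  qed simp
  hence "ennreal (c powr (1 / ?k)) *
      (\<integral>\<^sup>+x. ennreal (1 / norm (x::real^'n) ^ DIM(real^'n)) * indicator {x. 1 \<le> norm x} x \<partial>lborel)
      \<le> (\<integral>\<^sup>+x. enn_powr (?M x) (1 / ?k) \<partial>lborel)"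
    by (subst nn_integral_cmult[symmetric]) (auto intro: nn_integral_mono)
  hence "(\<integral>\<^sup>+x. enn_powr (?M x) (1 / ?k) \<partial>lborel) = \<infinity>"
    using nn_integral_inverse_norm_power_DIM_infinite[where 'a="real^'n"] \<open>c > 0\<close>
    by (simp add: ennreal_mult_top top_unique)
  moreover have "inverse (of_nat (card K) :: ennreal) = ennreal (1 / ?k)"
    using k by (simp add: ennreal_of_nat_eq_real_of_nat inverse_ennreal divide_inverse)
  ultimately show ?thesis
    using k by (simp add: Lq_norm_def enn_powr_def)
qed

theorem proposition2:
  fixes p :: "'m::finite \<Rightarrow> ennreal"
  assumes "CARD('n::finite) \<ge> 2"
    and "CARD('m) \<ge> 2"
    and "\<forall>j. p j \<in> {1, \<infinity>}"
  shows "(\<exists>C::real. \<forall>f :: 'm \<Rightarrow> real^'n \<Rightarrow> real.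
             (\<forall>j. f j \<in> borel_measurable lborel \<and> Lq_norm (p j) (\<lambda>x. ennreal \<bar>f j x\<bar>) < \<infinity>) \<longrightarrow>
             Lq_norm (inverse (\<Sum>j\<in>UNIV. inverse (p j))) (multi_sph_max f)
               \<le> ennreal C * (\<Prod>j\<in>UNIV. Lq_norm (p j) (\<lambda>x. ennreal \<bar>f j x\<bar>)))
         \<longleftrightarrow> (\<forall>j. p j = \<infinity>)"
proof (cases "\<forall>j. p j = \<infinity>")
  case True
  hence "p = (\<lambda>_. \<infinity>)"
    by auto
  thus ?thesis
    using Lq_norm_top_multi_sph_max_le[OF assms(2)]
    by (auto intro!: exI[of _ "measure (sphere_measure :: ((real^'n)^'m) measure) UNIV"])
next
  case False
  define K where "K = {j. p j = 1}"
  have p: "p j = (if j \<in> K then 1 else \<infinity>)" for j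
    using assms(3) by (auto simp: K_def)
  hence "K \<noteq> {}"
    using False by auto
  have fin: "Lq_norm (p j) (\<lambda>x. ennreal \<bar>ball_test K j (x::real^'n)\<bar>) < \<infinity>" for j
    by (rule Lq_norm_ball_test_less_top[OF p])
  have "(\<Sum>j\<in>UNIV. inverse (p j)) = of_nat (card K)"
    by (simp add: p if_distrib sum.If_cases)
  hence "Lq_norm (inverse (\<Sum>j\<in>UNIV. inverse (p j)))
      (multi_sph_max (ball_test K :: 'm \<Rightarrow> real^'n \<Rightarrow> real)) = \<infinity>"
    using Lq_norm_multi_sph_max_ball_test[OF \<open>K \<noteq> {}\<close>] by simp
  moreover have
    "ennreal C * (\<Prod>j\<in>UNIV. Lq_norm (p j) (\<lambda>x. ennreal \<bar>ball_test K j (x::real^'n)\<bar>)) \<noteq> \<infinity>" for C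
    using fin by (simp add: ennreal_mult_eq_top_iff ennreal_prod_eq_top flip: less_top)
  ultimately show ?thesis
    using False fin by (auto dest!: spec[of _ "ball_test K"] simp: top_unique)
qed

end
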